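(* Let $d\ge 1$ and $m>n\ge 1$ be integers, and let $f(d,n,m)$ be the minimum number of sets in an antipodal $(n,m)$-fold cover of $S^d$ with open sets. Then $f(d,n,m)\ge d+2n$.
   Context: $S^d$ denotes the $d$-dimensional unit sphere in $\mathbb{R}^{d+1}$ centered at the origin. A cover of $S^d$ is a (finite) family of subsets of $S^d$; it is an $n$-fold cover if every point of $S^d$ belongs to at least $n$ of the sets. A cover is antipodal if none of its sets contains a pair of antipodal points $x,-x$. The open northern hemisphere is $\{x\in S^d: x_{d+1}>0\}$. For $m>n\ge 1$, an $(n,m)$-fold cover of $S^d$ is an $n$-fold cover of $S^d$ in which every point of the open northern hemisphere belongs to at least $m$ of the sets. *)

theory Defs
  imports "HOL-Analysis.Analysis"
begin

text \<open>A finite family of subsets of the unit sphere S^d in a (d+1)-dimensional Euclidean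
space 'a, indexed by a finite index set I (repetitions allowed, the number of sets is card I).
The vector e is the coordinate direction playing the role of x_{d+1}.\<close>

definition open_sphere_family :: "'i set \<Rightarrow> ('i \<Rightarrow> 'a::euclidean_space set) \<Rightarrow> bool" where
  "open_sphere_family I U \<longleftrightarrow> finite I \<and>
     (\<forall>i\<in>I. openin (top_of_set (sphere (0::'a) 1)) (U i))"

definition antipodal_family :: "'i set \<Rightarrow> ('i \<Rightarrow> 'a::euclidean_space set) \<Rightarrow> bool" where
  "antipodal_family I U \<longleftrightarrow> (\<forall>i\<in>I. \<forall>x\<in>U i. - x \<notin> U i)"

definition nm_fold_cover :: "nat \<Rightarrow> nat \<Rightarrow> 'a::euclidean_space \<Rightarrow> 'i set \<Rightarrow> ('i \<Rightarrow> 'a set) \<Rightarrow> bool" where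
  "nm_fold_cover n m e I U \<longleftrightarrow>
     (\<forall>x\<in>sphere 0 1. n \<le> card {i\<in>I. x \<in> U i}) \<and>
     (\<forall>x\<in>sphere 0 1. x \<bullet> e > 0 \<longrightarrow> m \<le> card {i\<in>I. x \<in> U i})"

end

theory Submission
  imports Defs "HOL-Homology.Invariance_of_Domain"
begin

text \<open>Suppose an antipodal open n-fold cover of S^d had N < d + 2n sets, and choose
  j = N - 2n + 1 \<le> d of them. By Borsuk-Ulam, fewer than d + 1 antipodal open sets miss some
  antipodal pair x, - x entirely: their distance functions combine to an odd map from S^d into
  a j-dimensional space, which must vanish somewhere. But x and - x each lie in n of the
  remaining 2n - 1 sets, and no set contains both.

  Borsuk-Ulam follows from the fact that odd self-maps of spheres have odd (mod 2) degree,
  proved by induction on the dimension: an odd smooth approximation misses a point of the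
  sphere on the equator (Sard), which allows an odd homotopy and a reflection making the
  equator invariant, and Borsuk's degree step then compares degrees on sphere and equator.\<close>

lemma homotopic_with_normalized_segment:
  fixes f g :: "'a::euclidean_space \<Rightarrow> 'b::euclidean_space"
  assumes W: "subspace W"
    and contf: "continuous_on S f" and contg: "continuous_on S g"
    and fS: "f \<in> S \<rightarrow> sphere 0 1 \<inter> W" and gW: "g \<in> S \<rightarrow> W"
    and seg: "\<And>x. x \<in> S \<Longrightarrow> 0 \<notin> closed_segment (f x) (g x)"
  shows "homotopic_with_canon (\<lambda>x. True) S (sphere 0 1 \<inter> W) f (\<lambda>x. g x /\<^sub>R norm (g x))"
proof -
  have "homotopic_with_canon (\<lambda>x. True) S (W - {0}) f g"
  proof (rule homotopic_with_linear [OF contf contg])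
    fix x assume x: "x \<in> S"
    have "closed_segment (f x) (g x) \<subseteq> W"
      using closed_segment_subset subspace_imp_convex[OF W] fS gW x by blast
    then show "closed_segment (f x) (g x) \<subseteq> W - {0}" using seg[OF x] by auto
  qed
  moreover have "continuous_on (W - {0}) (\<lambda>y. y /\<^sub>R norm y)"
    by (intro continuous_intros) auto
  moreover have "(\<lambda>y. y /\<^sub>R norm y) \<in> W - {0} \<rightarrow> sphere 0 1 \<inter> W"
    using W by (auto simp: subspace_scale)
  ultimately have "homotopic_with_canon (\<lambda>x. True) S (sphere 0 1 \<inter> W)
      ((\<lambda>y. y /\<^sub>R norm y) \<circ> f) ((\<lambda>y. y /\<^sub>R norm y) \<circ> g)"
    by (rule homotopic_with_compose_continuous_left)
  then show ?thesis
    by (rule homotopic_with_eq) (use fS in \<open>auto simp: Pi_iff\<close>)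
qed

lemma odd_map_homotopic_differentiable:
  fixes f :: "'a::euclidean_space \<Rightarrow> 'a"
  assumes W: "subspace W"
    and contf: "continuous_on (sphere 0 1 \<inter> W) f"
    and fS: "f \<in> sphere 0 1 \<inter> W \<rightarrow> sphere 0 1 \<inter> W"
    and odd: "\<And>x. x \<in> sphere 0 1 \<inter> W \<Longrightarrow> f (- x) = - f x"
  obtains h where "h differentiable_on sphere 0 1 \<inter> W"
    "h \<in> sphere 0 1 \<inter> W \<rightarrow> sphere 0 1 \<inter> W"
    "\<And>x. h (- x) = - h x"
    "homotopic_with_canon (\<lambda>x. True) (sphere 0 1 \<inter> W) (sphere 0 1 \<inter> W) f h"
proof -
  let ?S = "sphere 0 1 \<inter> W"
  have negS: "- x \<in> ?S" if "x \<in> ?S" for x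
    using that W by (simp add: subspace_neg)
  have "compact ?S"
    by (rule compact_Int_closed[OF compact_sphere closed_subspace[OF W]])
  then obtain p where p: "polynomial_function p" and pW: "p ` ?S \<subseteq> W"
    and close: "\<And>x. x \<in> ?S \<Longrightarrow> norm (f x - p x) < 1/2"
    using Stone_Weierstrass_polynomial_function_subspace[OF _ contf _ W, of "1/2"] fS by auto
  \<comment> \<open>the odd part of the approximation is still within 1/2 of f, hence never 0\<close>
  define g where "g x = (1/2) *\<^sub>R (p x - p (- x))" for x
  have g_neg: "g (- x) = - g x" for x by (simp add: g_def algebra_simps)
  have gW: "g x \<in> W" if "x \<in> ?S" for x
    using pW negS[OF that] that unfolding g_def
    by (intro subspace_scale[OF W] subspace_diff[OF W]) auto
  have fg: "norm (f x - g x) < 1/2" if x: "x \<in> ?S" for x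
  proof -
    have "f x - g x = (1/2) *\<^sub>R ((f x - p x) - (f (- x) - p (- x)))"
      using odd[OF x] unfolding g_def by (simp add: algebra_simps flip: scaleR_add_left)
    also have "norm \<dots> \<le> (1/2) * (norm (f x - p x) + norm (f (- x) - p (- x)))"
      by (simp add: norm_triangle_ineq4)
    also have "\<dots> < 1/2" using close[OF x] close[OF negS[OF x]] by simp
    finally show ?thesis .
  qed
  have nf: "norm (f x) = 1" if "x \<in> ?S" for x using fS that by auto
  have diffp: "p differentiable_on UNIV"
    by (rule differentiable_on_polynomial_function[OF p])
  have diffg: "g differentiable_on ?S"
  proof -
    have "(\<lambda>x. p (- x)) differentiable_on ?S"
      by (rule differentiable_on_compose[of uminus ?S p])
         (auto intro: differentiable_on_subset[OF diffp] derivative_intros)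
    then show ?thesis unfolding g_def
      by (intro derivative_intros differentiable_on_subset[OF diffp]) auto
  qed
  have seg: "0 \<notin> closed_segment (f x) (g x)" if "x \<in> ?S" for x
    using fg[OF that] nf[OF that] by (auto simp: norm_minus_commute dest: segment_bound)
  then have gnz: "g x \<noteq> 0" if "x \<in> ?S" for x using that by fastforce
  show thesis
  proof
    show "(\<lambda>x. g x /\<^sub>R norm (g x)) differentiable_on ?S"
      using gnz by (fastforce intro: derivative_intros diffg differentiable_on_compose[OF diffg])
    show "(\<lambda>x. g x /\<^sub>R norm (g x)) \<in> ?S \<rightarrow> ?S"
      using gnz gW W by (auto simp: subspace_scale)
    show "g (- x) /\<^sub>R norm (g (- x)) = - (g x /\<^sub>R norm (g x))" for x
      by (simp add: g_neg)
    show "homotopic_with_canon (\<lambda>x. True) ?S ?S f (\<lambda>x. g x /\<^sub>R norm (g x))"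
      by (rule homotopic_with_normalized_segment[OF W contf])
         (use diffg differentiable_imp_continuous_on fS gW seg in auto)
  qed
qed

lemma unit_eq_scaled_projection_imp:
  fixes y p :: "'a::real_inner"
  assumes "norm y = 1" "norm p = 1" and y: "y = (c * (y \<bullet> p)) *\<^sub>R p"
  shows "c = 1 \<and> (y = p \<or> y = - p)"
proof -
  have pp: "p \<bullet> p = 1" using assms(2) by (simp add: dot_square_norm)
  have "y \<bullet> p = c * (y \<bullet> p)" using y pp by (metis inner_scaleR_left mult.right_neutral)
  moreover have "y \<bullet> p \<noteq> 0" using y assms(1) by fastforce
  ultimately have c: "c = 1" by simp
  then have "\<bar>y \<bullet> p\<bar> = 1" using y assms by (metis norm_scaleR mult.right_neutral mult_1 real_norm_def)
  then show ?thesis using y c by (auto simp: abs_if split: if_splits)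
qed

lemma odd_map_homotopic_orthogonal_on_equator:
  fixes h :: "'a::euclidean_space \<Rightarrow> 'a"
  assumes W: "subspace W" and u: "u \<in> W" "norm u = 1"
    and conth: "continuous_on (sphere 0 1 \<inter> W) h"
    and hS: "h \<in> sphere 0 1 \<inter> W \<rightarrow> sphere 0 1 \<inter> W"
    and odd: "\<And>x. h (- x) = - h x"
    and p: "p \<in> sphere 0 1 \<inter> W"
    and avoid: "\<And>x. x \<in> sphere 0 1 \<inter> W \<Longrightarrow> x \<bullet> u = 0 \<Longrightarrow> h x \<noteq> p \<and> h x \<noteq> - p"
  obtains h' where "continuous_on (sphere 0 1 \<inter> W) h'"
    "h' \<in> sphere 0 1 \<inter> W \<rightarrow> sphere 0 1 \<inter> W"
    "\<And>x. h' (- x) = - h' x"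
    "homotopic_with_canon (\<lambda>x. True) (sphere 0 1 \<inter> W) (sphere 0 1 \<inter> W) h h'"
    "\<And>x. x \<in> sphere 0 1 \<inter> W \<Longrightarrow> x \<bullet> u = 0 \<Longrightarrow> h' x \<bullet> p = 0"
proof -
  let ?S = "sphere 0 1 \<inter> W"
  \<comment> \<open>remove the p-component of h, fully on the equator and not at all at the poles \<open>\<plusminus>u\<close>\<close>
  define damp where "damp x = 1 - \<bar>x \<bullet> u\<bar>" for x
  define w where "w t x = h x - (t * damp x * (h x \<bullet> p)) *\<^sub>R p" for t x
  have pp: "p \<bullet> p = 1" using p by (simp add: dot_square_norm)
  have nh: "norm (h x) = 1" if "x \<in> ?S" for x using hS that by auto
  have damp_bounds: "0 \<le> damp x \<and> damp x \<le> 1" if "x \<in> ?S" for x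
    using Cauchy_Schwarz_ineq2[of x u] that u by (auto simp: damp_def)
  have wW: "w t x \<in> W" if "x \<in> ?S" for t x
    unfolding w_def using hS that p by (intro subspace_diff[OF W] subspace_scale[OF W]) auto
  have wnz: "w t x \<noteq> 0" if x: "x \<in> ?S" and t: "0 \<le> t" "t \<le> 1" for t x
  proof
    assume "w t x = 0"
    then have "h x = ((t * damp x) * (h x \<bullet> p)) *\<^sub>R p" by (simp add: w_def)
    then have "t * damp x = 1" and "h x = p \<or> h x = - p"
      using unit_eq_scaled_projection_imp nh[OF x] p by auto
    with damp_bounds[OF x] t have "damp x = 1"
      by (metis mult_le_one mult.commute mult_cancel_left1 order_antisym_conv mult_left_le)
    then have "x \<bullet> u = 0" by (simp add: damp_def)
    with \<open>h x = p \<or> h x = - p\<close> show False using avoid[OF x] by blast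
  qed
  have contw: "continuous_on ?S (w t)" for t
    unfolding w_def damp_def by (intro continuous_intros conth)
  show thesis
  proof
    show "continuous_on ?S (\<lambda>x. w 1 x /\<^sub>R norm (w 1 x))"
      using wnz by (intro continuous_intros contw) auto
    show "(\<lambda>x. w 1 x /\<^sub>R norm (w 1 x)) \<in> ?S \<rightarrow> ?S"
      using wnz wW by (auto simp: subspace_scale[OF W])
    show "w 1 (- x) /\<^sub>R norm (w 1 (- x)) = - (w 1 x /\<^sub>R norm (w 1 x))" for x
    proof -
      have "w 1 (- x) = - w 1 x" using odd by (simp add: w_def damp_def algebra_simps)
      then show ?thesis by simp
    qed
    show "(w 1 x /\<^sub>R norm (w 1 x)) \<bullet> p = 0" if "x \<in> ?S" "x \<bullet> u = 0" for x
      using that pp by (simp add: w_def damp_def inner_diff_left)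
    have "0 \<notin> closed_segment (h x) (w 1 x)" if x: "x \<in> ?S" for x
    proof
      assume "0 \<in> closed_segment (h x) (w 1 x)"
      then obtain t where "0 \<le> t" "t \<le> 1" "0 = (1 - t) *\<^sub>R h x + t *\<^sub>R w 1 x"
        by (auto simp: closed_segment_def)
      moreover have "(1 - t) *\<^sub>R h x + t *\<^sub>R w 1 x = w t x" by (simp add: w_def algebra_simps)
      ultimately show False using wnz[OF x] by metis
    qed
    then show "homotopic_with_canon (\<lambda>x. True) ?S ?S h (\<lambda>x. w 1 x /\<^sub>R norm (w 1 x))"
      by (intro homotopic_with_normalized_segment[OF W conth contw]) (use hS wW in auto)
  qed
qed

definition reflection :: "'a::real_inner \<Rightarrow> 'a \<Rightarrow> 'a" where
  "reflection w y = y - (2 / (w \<bullet> w) * (y \<bullet> w)) *\<^sub>R w"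

lemma reflection_neg: "reflection w (- y) = - reflection w y"
  by (simp add: reflection_def)

lemma inner_reflection: "reflection w x \<bullet> reflection w y = x \<bullet> y"
  by (cases "w \<bullet> w = 0")
     (simp_all add: reflection_def inner_diff_left inner_diff_right inner_commute field_simps)

lemma norm_reflection: "norm (reflection w y) = norm y"
  using inner_reflection[of w y y] by (simp add: dot_square_norm)

lemma continuous_on_reflection: "continuous_on A (reflection w)"
  unfolding reflection_def by (intro continuous_intros)

lemma reflection_in_subspace: "subspace W \<Longrightarrow> w \<in> W \<Longrightarrow> y \<in> W \<Longrightarrow> reflection w y \<in> W"
  unfolding reflection_def by (intro subspace_diff subspace_scale)

lemma reflection_swap:
  assumes "norm p = norm e"
  shows "reflection (p - e) p = e"
proof (cases "p = e")
  case False
  let ?w = "p - e"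
  have "p \<bullet> p = e \<bullet> e" using assms by (simp add: dot_square_norm)
  then have "?w \<bullet> ?w = 2 * (p \<bullet> ?w)"
    by (simp add: inner_diff_left inner_diff_right inner_commute)
  moreover have "?w \<bullet> ?w \<noteq> 0" using False by simp
  ultimately show ?thesis by (simp add: reflection_def)
qed (simp add: reflection_def)

text \<open>An enumeration b of the basis identifies the unit sphere of 'a with the sphere
  nsphere (DIM('a) - 1) of HOL-Homology, where Brouwer degrees live; coord_sphere k is the
  great k-sphere spanned by b 0, ..., b k.\<close>

locale coordinate_frame =
  fixes b :: "nat \<Rightarrow> 'a::euclidean_space"
  assumes bij_b: "bij_betw b {..<DIM('a)} Basis"
begin

definition to_seq :: "'a \<Rightarrow> nat \<Rightarrow> real" where
  "to_seq x = (\<lambda>i. if i < DIM('a) then x \<bullet> b i else 0)"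

definition of_seq :: "(nat \<Rightarrow> real) \<Rightarrow> 'a" where
  "of_seq y = (\<Sum>i<DIM('a). y i *\<^sub>R b i)"

definition coord_subspace :: "nat \<Rightarrow> 'a set" where
  "coord_subspace k = {x. \<forall>i. k < i \<longrightarrow> i < DIM('a) \<longrightarrow> x \<bullet> b i = 0}"

definition coord_sphere :: "nat \<Rightarrow> 'a set" where
  "coord_sphere k = sphere 0 1 \<inter> coord_subspace k"

definition sphere_degree :: "nat \<Rightarrow> ('a \<Rightarrow> 'a) \<Rightarrow> int" where
  "sphere_degree k f = Brouwer_degree2 k (to_seq \<circ> f \<circ> of_seq)"

lemma b_in_Basis: "i < DIM('a) \<Longrightarrow> b i \<in> Basis"
  using bij_b by (auto simp: bij_betw_def)

lemma inner_b_b: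
  assumes "i < DIM('a)" "j < DIM('a)"
  shows "b i \<bullet> b j = (if i = j then 1 else 0)"
proof -
  have "i \<noteq> j \<Longrightarrow> b i \<noteq> b j"
    using bij_b assms by (auto simp: bij_betw_def dest: inj_onD)
  then show ?thesis using b_in_Basis assms by (simp add: inner_not_same_Basis)
qed

lemma sum_Basis_b: "(\<Sum>u\<in>Basis. F u) = (\<Sum>i<DIM('a). F (b i))"
  using sum.reindex_bij_betw[OF bij_b, of F] by simp

lemma norm_sq_b: "norm x ^ 2 = (\<Sum>i<DIM('a). (x \<bullet> b i) ^ 2)"
  using euclidean_inner[of x x] sum_Basis_b[of "\<lambda>u. (x \<bullet> u) * (x \<bullet> u)"]
  by (simp add: dot_square_norm power2_eq_square)

lemma of_seq_to_seq [simp]: "of_seq (to_seq x) = x"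
  using euclidean_representation[of x] sum_Basis_b[of "\<lambda>u. (x \<bullet> u) *\<^sub>R u"]
  by (simp add: of_seq_def to_seq_def)

lemma inner_of_seq_b:
  assumes "j < DIM('a)"
  shows "of_seq y \<bullet> b j = y j"
proof -
  have "of_seq y \<bullet> b j = (\<Sum>i<DIM('a). if i = j then y j else 0)"
    unfolding of_seq_def inner_sum_left by (rule sum.cong) (auto simp: inner_b_b assms)
  then show ?thesis using assms by simp
qed

lemma to_seq_neg: "to_seq (- x) = (\<lambda>i. - to_seq x i)"
  by (auto simp: to_seq_def)

lemma of_seq_neg: "of_seq (\<lambda>i. - y i) = - of_seq y"
  by (simp add: of_seq_def sum_negf)

lemma subspace_coord_subspace: "subspace (coord_subspace k)"
  unfolding subspace_def coord_subspace_def by (auto simp: inner_add_left)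

lemma coord_subspace_mono: "k \<le> k' \<Longrightarrow> coord_subspace k \<subseteq> coord_subspace k'"
  unfolding coord_subspace_def by auto

lemma b_in_coord_subspace_iff:
  assumes "i < DIM('a)"
  shows "b i \<in> coord_subspace k \<longleftrightarrow> i \<le> k"
proof
  assume b: "b i \<in> coord_subspace k"
  show "i \<le> k"
  proof (rule ccontr)
    assume "\<not> i \<le> k"
    then have "b i \<bullet> b i = 0" using b assms by (simp add: coord_subspace_def)
    then show False using inner_b_b[OF assms assms] by simp
  qed
next
  assume "i \<le> k"
  then show "b i \<in> coord_subspace k"
    using assms by (simp add: coord_subspace_def inner_b_b)
qed

lemma dim_coord_subspace_less:
  assumes "Suc k < DIM('a)"
  shows "dim (coord_subspace k) < dim (coord_subspace (Suc k))"
proof -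
  have sub: "coord_subspace k \<subseteq> coord_subspace (Suc k)" by (rule coord_subspace_mono) simp
  moreover have "coord_subspace k \<noteq> coord_subspace (Suc k)"
    using b_in_coord_subspace_iff[OF assms, of k] b_in_coord_subspace_iff[OF assms, of "Suc k"] by auto
  ultimately have "\<not> dim (coord_subspace (Suc k)) \<le> dim (coord_subspace k)"
    using subspace_dim_equal[OF subspace_coord_subspace subspace_coord_subspace] by blast
  then show ?thesis by simp
qed

lemma coord_sphere_mono: "k \<le> k' \<Longrightarrow> coord_sphere k \<subseteq> coord_sphere k'"
  unfolding coord_sphere_def by (intro Int_mono order_refl coord_subspace_mono)

lemma neg_coord_sphere: "x \<in> coord_sphere k \<Longrightarrow> - x \<in> coord_sphere k"
  by (simp add: coord_sphere_def coord_subspace_def)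

lemma b_in_coord_sphere: "i < DIM('a) \<Longrightarrow> i \<le> k \<Longrightarrow> b i \<in> coord_sphere k"
  unfolding coord_sphere_def using b_in_coord_subspace_iff[of i k] b_in_Basis[of i]
  by (simp add: norm_Basis)

lemma coord_sphere_Suc_iff:
  assumes k: "Suc k < DIM('a)"
  shows "x \<in> coord_sphere k \<longleftrightarrow> x \<in> coord_sphere (Suc k) \<and> x \<bullet> b (Suc k) = 0"
proof
  assume x: "x \<in> coord_sphere k"
  then have "x \<in> coord_sphere (Suc k)" using coord_sphere_mono[of k "Suc k"] by auto
  moreover have "x \<bullet> b (Suc k) = 0" using x k by (simp add: coord_sphere_def coord_subspace_def)
  ultimately show "x \<in> coord_sphere (Suc k) \<and> x \<bullet> b (Suc k) = 0" by blast
next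
  assume x: "x \<in> coord_sphere (Suc k) \<and> x \<bullet> b (Suc k) = 0"
  have "x \<bullet> b i = 0" if "k < i" "i < DIM('a)" for i
  proof (cases "i = Suc k")
    case False
    then have "Suc k < i" using that by simp
    then show ?thesis using x that by (simp add: coord_sphere_def coord_subspace_def)
  qed (use x in simp)
  then show "x \<in> coord_sphere k" using x by (simp add: coord_sphere_def coord_subspace_def)
qed

lemma coord_sphere_0: "x \<in> coord_sphere 0 \<Longrightarrow> x = b 0 \<or> x = - b 0"
proof -
  assume x: "x \<in> coord_sphere 0"
  have "x = (\<Sum>i<DIM('a). (x \<bullet> b i) *\<^sub>R b i)"
    using of_seq_to_seq[of x] by (simp add: of_seq_def to_seq_def)
  also have "\<dots> = (x \<bullet> b 0) *\<^sub>R b 0"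
    by (subst sum.mono_neutral_right[of _ "{0}"]) (use x in \<open>auto simp: coord_sphere_def coord_subspace_def\<close>)
  finally have x_eq: "x = (x \<bullet> b 0) *\<^sub>R b 0" .
  moreover have "norm x = 1" using x by (simp add: coord_sphere_def)
  ultimately have "\<bar>x \<bullet> b 0\<bar> = 1"
    using b_in_Basis[OF DIM_positive] by (metis norm_Basis norm_scaleR real_norm_def mult.right_neutral)
  then show ?thesis using x_eq by (auto simp: abs_if split: if_splits)
qed

lemma nsphere_eq_top_of_set:
  "nsphere k = top_of_set {y. (\<Sum>i\<le>k. y i ^ 2) = 1 \<and> (\<forall>i>k. y i = 0)}"
  by (simp add: nsphere euclidean_product_topology)

lemma to_seq_in_nsphere:
  assumes "k < DIM('a)" "x \<in> coord_sphere k"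
  shows "to_seq x \<in> topspace (nsphere k)"
proof -
  have "(\<Sum>i\<le>k. (x \<bullet> b i) ^ 2) = (\<Sum>i<DIM('a). (x \<bullet> b i) ^ 2)"
    by (rule sum.mono_neutral_left) (use assms in \<open>auto simp: coord_sphere_def coord_subspace_def\<close>)
  also have "\<dots> = 1" using assms by (simp add: coord_sphere_def flip: norm_sq_b)
  finally show ?thesis
    using assms by (auto simp: nsphere_eq_top_of_set to_seq_def coord_sphere_def coord_subspace_def)
qed

lemma of_seq_in_coord_sphere:
  assumes "k < DIM('a)" "y \<in> topspace (nsphere k)"
  shows "of_seq y \<in> coord_sphere k"
proof -
  have y: "(\<Sum>i\<le>k. y i ^ 2) = 1" "\<And>i. k < i \<Longrightarrow> y i = 0"
    using assms by (auto simp: nsphere_eq_top_of_set)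
  have "norm (of_seq y) ^ 2 = (\<Sum>i<DIM('a). y i ^ 2)" by (simp add: norm_sq_b inner_of_seq_b)
  also have "\<dots> = (\<Sum>i\<le>k. y i ^ 2)"
    by (rule sum.mono_neutral_right) (use assms y in auto)
  finally have "norm (of_seq y) = 1" using y norm_ge_zero[of "of_seq y"] by (simp add: power2_eq_1_iff)
  then show ?thesis using y by (auto simp: coord_sphere_def coord_subspace_def inner_of_seq_b)
qed

lemma to_seq_of_seq:
  assumes "k < DIM('a)" "y \<in> topspace (nsphere k)"
  shows "to_seq (of_seq y) = y"
  using assms by (auto simp: fun_eq_iff to_seq_def inner_of_seq_b nsphere_eq_top_of_set)

lemma continuous_on_of_seq: "continuous_on A of_seq"
  unfolding of_seq_def
  by (intro continuous_intros continuous_on_subset[OF continuous_on_product_coordinates]) auto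

lemma continuous_on_to_seq: "continuous_on A to_seq"
proof (rule continuous_on_coordinatewise_then_product)
  fix i show "continuous_on A (\<lambda>x. to_seq x i)"
    by (cases "i < DIM('a)") (auto simp: to_seq_def intro!: continuous_intros)
qed

lemma continuous_map_nsphere_coord_sphere:
  assumes k: "k < DIM('a)"
    and f: "continuous_on (coord_sphere k) f" "f \<in> coord_sphere k \<rightarrow> coord_sphere k"
  shows "continuous_map (nsphere k) (nsphere k) (to_seq \<circ> f \<circ> of_seq)"
proof -
  let ?N = "topspace (nsphere k)"
  have "continuous_on ?N (f \<circ> of_seq)"
    using of_seq_in_coord_sphere[OF k]
    by (intro continuous_on_compose continuous_on_of_seq continuous_on_subset[OF f(1)]) auto
  then have "continuous_on ?N (to_seq \<circ> f \<circ> of_seq)"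
    unfolding o_assoc[symmetric] by (rule continuous_on_compose[OF _ continuous_on_to_seq])
  moreover have "to_seq \<circ> f \<circ> of_seq \<in> ?N \<rightarrow> ?N"
    using f(2) of_seq_in_coord_sphere[OF k] to_seq_in_nsphere[OF k] by (auto simp: Pi_iff)
  ultimately show ?thesis
    by (simp add: nsphere_eq_top_of_set continuous_map_subtopology_eu)
qed

lemma sphere_degree_homotopic:
  assumes k: "k < DIM('a)"
    and "homotopic_with_canon (\<lambda>x. True) (coord_sphere k) (coord_sphere k) f g"
  shows "sphere_degree k f = sphere_degree k g"
proof -
  let ?N = "topspace (nsphere k)"
  have "homotopic_with_canon (\<lambda>x. True) ?N (coord_sphere k) (f \<circ> of_seq) (g \<circ> of_seq)"
    by (rule homotopic_with_compose_continuous_right[OF _ continuous_on_of_seq])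
       (use assms of_seq_in_coord_sphere[OF k] in auto)
  then have "homotopic_with_canon (\<lambda>x. True) ?N ?N (to_seq \<circ> (f \<circ> of_seq)) (to_seq \<circ> (g \<circ> of_seq))"
    by (rule homotopic_with_compose_continuous_left[OF _ continuous_on_to_seq])
       (use to_seq_in_nsphere[OF k] in auto)
  then show ?thesis
    unfolding sphere_degree_def
    by (intro Brouwer_degree2_homotopic) (simp add: nsphere_eq_top_of_set o_assoc)
qed

lemma sphere_degree_compose:
  assumes k: "k < DIM('a)"
    and f: "continuous_on (coord_sphere k) f" "f \<in> coord_sphere k \<rightarrow> coord_sphere k"
    and g: "continuous_on (coord_sphere k) g" "g \<in> coord_sphere k \<rightarrow> coord_sphere k"
  shows "sphere_degree k (g \<circ> f) = sphere_degree k g * sphere_degree k f"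
proof -
  have "sphere_degree k (g \<circ> f)
      = Brouwer_degree2 k ((to_seq \<circ> g \<circ> of_seq) \<circ> (to_seq \<circ> f \<circ> of_seq))"
    unfolding sphere_degree_def
  proof (rule Brouwer_degree2_eq)
    fix y assume "y \<in> topspace (nsphere k)"
    then have "f (of_seq y) \<in> coord_sphere k" using f(2) of_seq_in_coord_sphere[OF k] by auto
    then show "(to_seq \<circ> (g \<circ> f) \<circ> of_seq) y = ((to_seq \<circ> g \<circ> of_seq) \<circ> (to_seq \<circ> f \<circ> of_seq)) y"
      by simp
  qed
  also have "\<dots> = sphere_degree k g * sphere_degree k f"
    unfolding sphere_degree_def
    by (rule Brouwer_degree2_compose[OF continuous_map_nsphere_coord_sphere[OF k f]
          continuous_map_nsphere_coord_sphere[OF k g]])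
  finally show ?thesis .
qed

lemma odd_sphere_degree_0:
  assumes fS: "f \<in> coord_sphere 0 \<rightarrow> coord_sphere 0"
    and odd: "\<And>x. x \<in> coord_sphere 0 \<Longrightarrow> f (- x) = - f x"
  shows "odd (sphere_degree 0 f)"
proof -
  have b0: "b 0 \<in> coord_sphere 0" by (simp add: b_in_coord_sphere)
  have y_in: "of_seq y \<in> coord_sphere 0" "to_seq (of_seq y) = y"
    if "y \<in> topspace (nsphere 0)" for y
    using that of_seq_in_coord_sphere[OF DIM_positive] to_seq_of_seq[OF DIM_positive] by auto
  \<comment> \<open>the 0-sphere is {b 0, - b 0}, so an odd self-map is the identity or the antipodal map\<close>
  consider "f (b 0) = b 0" | "f (b 0) = - b 0" using coord_sphere_0 fS b0 by blast
  then show ?thesis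
  proof cases
    case 1
    then have "f x = x" if "x \<in> coord_sphere 0" for x
      using coord_sphere_0[OF that] odd[OF b0] by auto
    then have "sphere_degree 0 f = Brouwer_degree2 0 id"
      unfolding sphere_degree_def by (intro Brouwer_degree2_eq) (simp add: y_in)
    then show ?thesis by simp
  next
    case 2
    then have "f x = - x" if "x \<in> coord_sphere 0" for x
      using coord_sphere_0[OF that] odd[OF b0] by auto
    then have "sphere_degree 0 f = Brouwer_degree2 0 (\<lambda>x i. if i = 0 then - x i else x i)"
      unfolding sphere_degree_def
    proof (intro Brouwer_degree2_eq)
      fix y assume y: "y \<in> topspace (nsphere 0)"
      have "(to_seq \<circ> f \<circ> of_seq) y = (\<lambda>i. - y i)"
        using \<open>\<And>x. x \<in> coord_sphere 0 \<Longrightarrow> f x = - x\<close> y_in[OF y] by (simp add: to_seq_neg)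
      also have "\<dots> = (\<lambda>i. if i = 0 then - y i else y i)"
        using y by (auto simp: nsphere_eq_top_of_set fun_eq_iff)
      finally show "(to_seq \<circ> f \<circ> of_seq) y = (\<lambda>i. if i = 0 then - y i else y i)" .
    qed
    then show ?thesis by (simp add: Brouwer_degree2_reflection)
  qed
qed

lemma odd_sphere_degree_Suc:
  assumes k: "Suc k < DIM('a)"
    and contf: "continuous_on (coord_sphere (Suc k)) f"
    and fS: "f \<in> coord_sphere (Suc k) \<rightarrow> coord_sphere (Suc k)"
    and odd: "\<And>x. x \<in> coord_sphere (Suc k) \<Longrightarrow> f (- x) = - f x"
    and f_equator: "f \<in> coord_sphere k \<rightarrow> coord_sphere k"
    and odd_deg: "odd (sphere_degree k f)"
  shows "odd (sphere_degree (Suc k) f)"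
proof -
  let ?F = "to_seq \<circ> f \<circ> of_seq"
  have "even (Brouwer_degree2 (Suc k) ?F - Brouwer_degree2 (Suc k - Suc 0) ?F)"
  proof (rule Borsuk_odd_mapping_degree_step[OF continuous_map_nsphere_coord_sphere[OF k contf fS]])
    fix y assume "y \<in> topspace (nsphere (Suc k))"
    then show "(?F \<circ> (\<lambda>x i. - x i)) y = ((\<lambda>x i. - x i) \<circ> ?F) y"
      using odd of_seq_in_coord_sphere[OF k] by (simp add: of_seq_neg to_seq_neg)
  next
    show "?F \<in> topspace (nsphere (Suc k - Suc 0)) \<rightarrow> topspace (nsphere (Suc k - Suc 0))"
      using k f_equator of_seq_in_coord_sphere[of k] to_seq_in_nsphere[of k] by force
  qed
  then show ?thesis using odd_deg by (simp add: sphere_degree_def)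
qed

lemma odd_map_homotopic_orthogonal_on_coord_equator:
  assumes k: "Suc k < DIM('a)"
    and contf: "continuous_on (coord_sphere (Suc k)) f"
    and fS: "f \<in> coord_sphere (Suc k) \<rightarrow> coord_sphere (Suc k)"
    and odd: "\<And>x. x \<in> coord_sphere (Suc k) \<Longrightarrow> f (- x) = - f x"
  obtains h p where "continuous_on (coord_sphere (Suc k)) h"
    "h \<in> coord_sphere (Suc k) \<rightarrow> coord_sphere (Suc k)"
    "\<And>x. h (- x) = - h x"
    "homotopic_with_canon (\<lambda>x. True) (coord_sphere (Suc k)) (coord_sphere (Suc k)) f h"
    "p \<in> coord_sphere (Suc k)" "\<And>x. x \<in> coord_sphere k \<Longrightarrow> h x \<bullet> p = 0"
proof -
  let ?S = "coord_sphere (Suc k)" and ?W = "coord_subspace (Suc k)"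
  have W: "subspace ?W" by (rule subspace_coord_subspace)
  obtain g where diffg: "g differentiable_on ?S" and gS: "g \<in> ?S \<rightarrow> ?S"
    and g_odd: "\<And>x. g (- x) = - g x" and fg: "homotopic_with_canon (\<lambda>x. True) ?S ?S f g"
    using odd_map_homotopic_differentiable[OF W contf[unfolded coord_sphere_def]]
      fS odd unfolding coord_sphere_def by metis
  \<comment> \<open>by Sard, the smooth image of the lower-dimensional equator misses some point p\<close>
  have "g ` coord_sphere k \<noteq> ?S"
    using spheremap_lemma1[OF subspace_coord_subspace W dim_coord_subspace_less[OF k]
        coord_subspace_mono, of g] differentiable_on_subset[OF diffg coord_sphere_mono[of k "Suc k"]]
    by (simp add: coord_sphere_def)
  moreover have "g ` coord_sphere k \<subseteq> ?S" using gS coord_sphere_mono[of k "Suc k"] by auto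
  ultimately obtain p where p: "p \<in> ?S" "p \<notin> g ` coord_sphere k" by blast
  have avoid: "g x \<noteq> p \<and> g x \<noteq> - p" if "x \<in> ?S" "x \<bullet> b (Suc k) = 0" for x
  proof -
    have "x \<in> coord_sphere k" "- x \<in> coord_sphere k"
      using that coord_sphere_Suc_iff[OF k] neg_coord_sphere by blast+
    then show ?thesis using p(2) g_odd[of x] by (metis image_eqI minus_minus)
  qed
  obtain h where "continuous_on ?S h" "h \<in> ?S \<rightarrow> ?S" "\<And>x. h (- x) = - h x"
    "homotopic_with_canon (\<lambda>x. True) ?S ?S g h"
    and hp: "\<And>x. x \<in> ?S \<Longrightarrow> x \<bullet> b (Suc k) = 0 \<Longrightarrow> h x \<bullet> p = 0"
    using odd_map_homotopic_orthogonal_on_equator[OF W, of "b (Suc k)" g p] k p(1) gS g_odd avoid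
      differentiable_imp_continuous_on[OF diffg]
    by (auto simp: coord_sphere_def b_in_coord_subspace_iff b_in_Basis norm_Basis)
  moreover have "homotopic_with_canon (\<lambda>x. True) ?S ?S f h"
    using fg \<open>homotopic_with_canon (\<lambda>x. True) ?S ?S g h\<close> by (rule homotopic_with_trans)
  moreover have "h x \<bullet> p = 0" if "x \<in> coord_sphere k" for x
    using hp that coord_sphere_Suc_iff[OF k] by blast
  ultimately show thesis using that p(1) by blast
qed

lemma odd_sphere_degree_Suc_of_orthogonal:
  assumes k: "Suc k < DIM('a)"
    and conth: "continuous_on (coord_sphere (Suc k)) h"
    and hS: "h \<in> coord_sphere (Suc k) \<rightarrow> coord_sphere (Suc k)"
    and h_odd: "\<And>x. h (- x) = - h x"
    and p: "p \<in> coord_sphere (Suc k)" and hp: "\<And>x. x \<in> coord_sphere k \<Longrightarrow> h x \<bullet> p = 0"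
    and odd_k: "\<And>g. continuous_on (coord_sphere k) g \<Longrightarrow> g \<in> coord_sphere k \<rightarrow> coord_sphere k
      \<Longrightarrow> (\<And>x. x \<in> coord_sphere k \<Longrightarrow> g (- x) = - g x) \<Longrightarrow> odd (sphere_degree k g)"
  shows "odd (sphere_degree (Suc k) h)"
proof -
  let ?S = "coord_sphere (Suc k)"
  \<comment> \<open>move p to the pole b (Suc k), which makes the equator invariant\<close>
  define R where "R = reflection (p - b (Suc k))"
  have Rp: "R p = b (Suc k)"
    using p b_in_Basis[OF k] by (simp add: R_def reflection_swap coord_sphere_def norm_Basis)
  have contR: "continuous_on ?S R" by (simp add: R_def continuous_on_reflection)
  have RS: "R \<in> ?S \<rightarrow> ?S"
    using p b_in_coord_sphere[OF k] subspace_coord_subspace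
    by (auto simp: R_def coord_sphere_def norm_reflection reflection_in_subspace subspace_diff)
  let ?g = "R \<circ> h"
  have contg: "continuous_on ?S ?g"
    by (rule continuous_on_compose[OF conth]) (use contR hS in \<open>auto intro: continuous_on_subset\<close>)
  have gS: "?g \<in> ?S \<rightarrow> ?S" using hS RS by auto
  have g_odd: "?g (- x) = - ?g x" for x by (simp add: h_odd R_def reflection_neg)
  have g_equator: "?g \<in> coord_sphere k \<rightarrow> coord_sphere k"
  proof
    fix x assume x: "x \<in> coord_sphere k"
    then have "x \<in> ?S" using coord_sphere_Suc_iff[OF k] by blast
    moreover have "?g x \<bullet> b (Suc k) = 0"
      using hp[OF x] Rp inner_reflection[of "p - b (Suc k)" "h x" p] by (simp add: R_def)
    ultimately show "?g x \<in> coord_sphere k" using gS coord_sphere_Suc_iff[OF k] by blast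
  qed
  have "odd (sphere_degree k ?g)"
  proof (rule odd_k[OF _ g_equator])
    show "continuous_on (coord_sphere k) ?g"
      by (rule continuous_on_subset[OF contg coord_sphere_mono]) simp
  qed (use g_odd in auto)
  then have "odd (sphere_degree (Suc k) ?g)"
    using odd_sphere_degree_Suc[OF k contg gS] g_odd g_equator by blast
  then show ?thesis using sphere_degree_compose[OF k conth hS contR RS] by simp
qed

theorem odd_sphere_degree:
  assumes "k < DIM('a)"
    and "continuous_on (coord_sphere k) f" "f \<in> coord_sphere k \<rightarrow> coord_sphere k"
    and "\<And>x. x \<in> coord_sphere k \<Longrightarrow> f (- x) = - f x"
  shows "odd (sphere_degree k f)"
  using assms
proof (induction k arbitrary: f)
  case 0
  then show ?case by (intro odd_sphere_degree_0) auto
next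
  case (Suc k)
  let ?S = "coord_sphere (Suc k)"
  have k: "Suc k < DIM('a)" by (fact Suc.prems(1))
  obtain h p where "continuous_on ?S h" "h \<in> ?S \<rightarrow> ?S" "\<And>x. h (- x) = - h x"
    and fh: "homotopic_with_canon (\<lambda>x. True) ?S ?S f h"
    and "p \<in> ?S" "\<And>x. x \<in> coord_sphere k \<Longrightarrow> h x \<bullet> p = 0"
    using odd_map_homotopic_orthogonal_on_coord_equator[OF k Suc.prems(2-4)] by blast
  moreover have "odd (sphere_degree k g)"
    if "continuous_on (coord_sphere k) g" "g \<in> coord_sphere k \<rightarrow> coord_sphere k"
      "\<And>x. x \<in> coord_sphere k \<Longrightarrow> g (- x) = - g x" for g
    using Suc.IH k that by simp
  ultimately have "odd (sphere_degree (Suc k) h)"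
    using odd_sphere_degree_Suc_of_orthogonal[OF k] by blast
  then show ?case using sphere_degree_homotopic[OF k fh] by simp
qed

corollary no_odd_map_coord_sphere_Suc:
  assumes k: "Suc k < DIM('a)"
    and contf: "continuous_on (coord_sphere (Suc k)) f"
    and fS: "f \<in> coord_sphere (Suc k) \<rightarrow> coord_sphere k"
    and odd: "\<And>x. x \<in> coord_sphere (Suc k) \<Longrightarrow> f (- x) = - f x"
  shows False
proof -
  have fS': "f \<in> coord_sphere (Suc k) \<rightarrow> coord_sphere (Suc k)"
    using fS coord_sphere_mono[of k "Suc k"] by auto
  have "odd (sphere_degree (Suc k) f)"
    by (rule odd_sphere_degree[OF k contf fS' odd])
  moreover have "sphere_degree (Suc k) f = 0"
    unfolding sphere_degree_def
  proof (rule Brouwer_degree2_nonsurjective[OF continuous_map_nsphere_coord_sphere[OF k contf fS']])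
    \<comment> \<open>the image lies in the equator, so it misses the pole b (Suc k)\<close>
    have "to_seq (b (Suc k)) \<in> topspace (nsphere (Suc k))"
      using to_seq_in_nsphere[OF k] b_in_coord_sphere[OF k] by simp
    moreover have "to_seq (b (Suc k)) \<noteq> to_seq (f (of_seq y))" if "y \<in> topspace (nsphere (Suc k))" for y
    proof -
      have "f (of_seq y) \<in> coord_sphere k" using fS of_seq_in_coord_sphere[OF k that] by auto
      then have "to_seq (f (of_seq y)) (Suc k) = 0"
        using k coord_sphere_Suc_iff[OF k] by (simp add: to_seq_def)
      moreover have "to_seq (b (Suc k)) (Suc k) = 1" using k by (simp add: to_seq_def inner_b_b)
      ultimately show ?thesis by auto
    qed
    ultimately show "(to_seq \<circ> f \<circ> of_seq) ` topspace (nsphere (Suc k)) \<noteq> topspace (nsphere (Suc k))"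
      by auto
  qed
  ultimately show False by simp
qed

end

lemma obtain_Basis_enumeration_prefix:
  assumes B: "B \<subseteq> (Basis :: 'a::euclidean_space set)"
  obtains b where "bij_betw b {..<DIM('a)} Basis" "b ` {..<card B} = B"
proof -
  have fin: "finite B" "finite (Basis - B)" using B finite_subset[OF B] by auto
  obtain f where f: "bij_betw f {0..<card B} B" using ex_bij_betw_nat_finite[OF fin(1)] by blast
  obtain g where g: "bij_betw g {0..<card (Basis - B)} (Basis - B)"
    using ex_bij_betw_nat_finite[OF fin(2)] by blast
  have card_diff: "card (Basis - B) = DIM('a) - card B" by (simp add: B card_Diff_subset fin(1))
  have card_le: "card B \<le> DIM('a)" using B by (simp add: card_mono)
  define c where "c i = (if i < card B then f i else g (i - card B))" for i
  have c_low: "c ` {..<card B} = B"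
    using f by (auto simp: c_def bij_betw_def image_iff atLeast0LessThan)
  have "(\<lambda>i. i - card B) ` {card B..<DIM('a)} = {0..<card (Basis - B)}"
    using card_diff by (auto simp: image_minus_const_atLeastLessThan_nat)
  moreover have "c ` {card B..<DIM('a)} = g ` (\<lambda>i. i - card B) ` {card B..<DIM('a)}"
    unfolding image_image by (rule image_cong) (auto simp: c_def)
  ultimately have "c ` {card B..<DIM('a)} = g ` {0..<card (Basis - B)}"
    by simp
  then have c_high: "c ` {card B..<DIM('a)} = Basis - B" using g by (simp add: bij_betw_def)
  have "{..<DIM('a)} = {..<card B} \<union> {card B..<DIM('a)}" using card_le by auto
  then have "c ` {..<DIM('a)} = B \<union> (Basis - B)" by (simp add: image_Un c_low c_high)
  then have c_all: "c ` {..<DIM('a)} = Basis" using B by blast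
  then have "inj_on c {..<DIM('a)}" by (intro eq_card_imp_inj_on) auto
  with c_all c_low show thesis by (intro that) (auto simp: bij_betw_def)
qed

theorem odd_map_sphere_into_lower_span_has_zero:
  fixes q :: "'a::euclidean_space \<Rightarrow> 'a"
  assumes contq: "continuous_on (sphere 0 1) q"
    and odd: "\<And>x. x \<in> sphere 0 1 \<Longrightarrow> q (- x) = - q x"
    and B: "B \<subseteq> Basis" "card B < DIM('a)" and qB: "q ` sphere 0 1 \<subseteq> span B"
  shows "\<exists>x\<in>sphere 0 1. q x = 0"
proof (cases "B = {}")
  case True
  obtain u :: 'a where "u \<in> Basis" using nonempty_Basis by blast
  then have u: "u \<in> sphere 0 1" by (simp add: norm_Basis)
  then have "q u \<in> span B" using qB by blast
  then have "q u = 0" using True by simp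
  then show ?thesis using u by blast
next
  case False
  then have "card B \<noteq> 0" using finite_subset[OF B(1)] by simp
  then obtain k where k: "card B = Suc k" using not0_implies_Suc by blast
  obtain b where bij: "bij_betw b {..<DIM('a)} Basis" and bB: "b ` {..<Suc k} = B"
    using obtain_Basis_enumeration_prefix[OF B(1)] k by metis
  interpret coordinate_frame b by unfold_locales (fact bij)
  have k2: "Suc k < DIM('a)" using B(2) k by simp
  have "b i \<in> coord_subspace k" if "i < Suc k" for i
    using that k2 by (simp add: b_in_coord_subspace_iff)
  then have "span B \<subseteq> coord_subspace k"
    using bB by (intro span_minimal subspace_coord_subspace) auto
  then have q_sub: "q x \<in> coord_subspace k" if "x \<in> sphere 0 1" for x
    using qB that by blast
  have sub: "coord_sphere (Suc k) \<subseteq> sphere 0 1" by (simp add: coord_sphere_def)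
  show ?thesis
  proof (rule ccontr)
    assume "\<not> ?thesis"
    then have nz: "q x \<noteq> 0" if "x \<in> coord_sphere (Suc k)" for x using that sub by blast
    show False
    proof (rule no_odd_map_coord_sphere_Suc[OF k2, of "\<lambda>x. q x /\<^sub>R norm (q x)"])
      show "continuous_on (coord_sphere (Suc k)) (\<lambda>x. q x /\<^sub>R norm (q x))"
        using nz by (intro continuous_intros continuous_on_subset[OF contq sub]) auto
      show "(\<lambda>x. q x /\<^sub>R norm (q x)) \<in> coord_sphere (Suc k) \<rightarrow> coord_sphere k"
        using nz q_sub sub by (auto simp: coord_sphere_def subspace_scale[OF subspace_coord_subspace])
      show "q (- x) /\<^sub>R norm (q (- x)) = - (q x /\<^sub>R norm (q x))" if "x \<in> coord_sphere (Suc k)" for x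
        using odd that sub by auto
    qed
  qed
qed

lemma antipodal_family_pair_count:
  assumes I: "finite I" and anti: "antipodal_family I U" and J: "J \<subseteq> I"
    and cover: "n \<le> card {i\<in>I. x \<in> U i}" "n \<le> card {i\<in>I. - x \<in> U i}"
    and miss: "\<And>i. i \<in> J \<Longrightarrow> x \<notin> U i \<and> - x \<notin> U i"
  shows "2 * n \<le> card (I - J)"
proof -
  let ?A = "{i\<in>I. x \<in> U i}" and ?B = "{i\<in>I. - x \<in> U i}"
  have "?A \<inter> ?B = {}" using anti by (auto simp: antipodal_family_def)
  then have "card (?A \<union> ?B) = card ?A + card ?B" using I by (intro card_Un_disjoint) auto
  moreover have "?A \<union> ?B \<subseteq> I - J" using miss by auto
  then have "card (?A \<union> ?B) \<le> card (I - J)" using I by (intro card_mono) auto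
  ultimately show ?thesis using cover by linarith
qed

lemma infdist_complement_antipodal_less:
  fixes U :: "'a::euclidean_space set"
  assumes U: "openin (top_of_set (sphere 0 1)) U" and anti: "\<forall>y\<in>U. - y \<notin> U" and x: "x \<in> U"
  shows "infdist (- x) (sphere 0 1 - U) < infdist x (sphere 0 1 - U)"
proof -
  let ?C = "sphere 0 1 - U"
  have "closedin (top_of_set (sphere 0 1)) ?C" using U by (simp add: openin_closedin_eq)
  then have "closed ?C" by (rule closedin_closed_trans[OF _ closed_sphere])
  moreover have "- x \<in> ?C" using x anti openin_subset[OF U] by auto
  moreover have "x \<notin> ?C" using x by blast
  ultimately have "0 < infdist x ?C" by (metis empty_iff infdist_pos_not_in_closed)
  then show ?thesis using \<open>- x \<in> ?C\<close> by simp
qed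

lemma antipodal_open_family_misses_antipodal_pair:
  fixes U :: "'i \<Rightarrow> 'a::euclidean_space set"
  assumes opn: "open_sphere_family J U" and anti: "antipodal_family J U"
    and card: "card J < DIM('a)"
  shows "\<exists>x\<in>sphere 0 1. \<forall>i\<in>J. x \<notin> U i \<and> - x \<notin> U i"
proof -
  let ?S = "sphere (0::'a) 1"
  have J: "finite J" using opn by (simp add: open_sphere_family_def)
  have "card J \<le> card (Basis :: 'a set)" using card by simp
  then obtain \<beta> :: "'i \<Rightarrow> 'a" where \<beta>: "\<beta> ` J \<subseteq> Basis" "inj_on \<beta> J"
    using card_le_inj[OF J finite_Basis] by blast
  have inner_\<beta>: "\<beta> i \<bullet> \<beta> j = (if i = j then 1 else 0)" if "i \<in> J" "j \<in> J" for i j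
  proof -
    have "i \<noteq> j \<Longrightarrow> \<beta> i \<noteq> \<beta> j" using \<beta>(2) that by (auto dest: inj_onD)
    moreover have "\<beta> i \<in> Basis" "\<beta> j \<in> Basis" using \<beta>(1) that by auto
    ultimately show ?thesis by (simp add: inner_not_same_Basis)
  qed
  \<comment> \<open>odd in x, and nonzero wherever x or - x lies in U i\<close>
  define sep where "sep i x = infdist x (?S - U i) - infdist (- x) (?S - U i)" for i x
  define q where "q x = (\<Sum>i\<in>J. sep i x *\<^sub>R \<beta> i)" for x
  have inner_q: "q x \<bullet> \<beta> j = sep j x" if "j \<in> J" for j x
  proof -
    have "q x \<bullet> \<beta> j = (\<Sum>i\<in>J. if i = j then sep j x else 0)"
      unfolding q_def inner_sum_left by (rule sum.cong) (auto simp: inner_\<beta> that)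
    then show ?thesis using J that by simp
  qed
  have "continuous_on ?S q"
    unfolding q_def sep_def by (intro continuous_intros continuous_on_infdist)
  moreover have "q (- x) = - q x" for x
  proof -
    have "sep i (- x) = - sep i x" for i by (simp add: sep_def)
    then show ?thesis by (simp add: q_def flip: sum_negf)
  qed
  moreover have "q ` ?S \<subseteq> span (\<beta> ` J)"
    unfolding q_def by (intro image_subsetI span_sum span_scale span_base) auto
  moreover have "card (\<beta> ` J) < DIM('a)" using card card_image_le[OF J, of \<beta>] by linarith
  ultimately obtain x where x: "x \<in> ?S" and "q x = 0"
    using odd_map_sphere_into_lower_span_has_zero[OF _ _ \<beta>(1)] by blast
  then have sep0: "sep i x = 0" if "i \<in> J" for i using inner_q[OF that, of x] by simp
  have "x \<notin> U i \<and> - x \<notin> U i" if i: "i \<in> J" for i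
  proof -
    have U: "openin (top_of_set ?S) (U i)" "\<forall>y\<in>U i. - y \<notin> U i"
      using opn anti i by (auto simp: open_sphere_family_def antipodal_family_def)
    show ?thesis
      using infdist_complement_antipodal_less[OF U, of x] infdist_complement_antipodal_less[OF U, of "- x"]
        sep0[OF i] by (auto simp: sep_def)
  qed
  then show ?thesis using x by blast
qed

theorem proposition2:
  fixes I :: "'i set" and U :: "'i \<Rightarrow> 'a::euclidean_space set"
    and d n m :: nat and e :: 'a
  assumes "DIM('a) = d + 1" and "1 \<le> d" and "1 \<le> n" and "n < m"
    and "e \<in> Basis"
    and "open_sphere_family I U"
    and "antipodal_family I U"
    and "nm_fold_cover n m e I U"
  shows "d + 2 * n \<le> card I"
proof (rule ccontr)
  assume "\<not> d + 2 * n \<le> card I"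
  have I: "finite I" using assms(6) by (simp add: open_sphere_family_def)
  have cover: "n \<le> card {i\<in>I. x \<in> U i}" if "x \<in> sphere 0 1" for x
    using assms(8) that by (simp add: nm_fold_cover_def)
  have pair_count: "2 * n \<le> card (I - J)"
    if "J \<subseteq> I" "x \<in> sphere 0 1" "\<And>i. i \<in> J \<Longrightarrow> x \<notin> U i \<and> - x \<notin> U i" for J x
    using antipodal_family_pair_count[OF I assms(7) that(1) cover cover that(3)] that(2) by simp
  have "e \<in> sphere 0 1" using assms(5) by (simp add: norm_Basis)
  then have "2 * n \<le> card I" using pair_count[of "{}"] by simp
  moreover have "card I + 1 - 2 * n \<le> card I" using assms(3) by linarith
  ultimately obtain J where J: "J \<subseteq> I" "card J = card I + 1 - 2 * n"
    using obtain_subset_with_card_n by metis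
  have "card J < DIM('a)" using J(2) assms(1) \<open>\<not> d + 2 * n \<le> card I\<close> by linarith
  moreover have "open_sphere_family J U" "antipodal_family J U"
    using assms(6,7) J(1) I finite_subset
    by (auto simp: open_sphere_family_def antipodal_family_def)
  ultimately obtain x where "x \<in> sphere 0 1" "\<And>i. i \<in> J \<Longrightarrow> x \<notin> U i \<and> - x \<notin> U i"
    using antipodal_open_family_misses_antipodal_pair by blast
  then have "2 * n \<le> card I - card J"
    using pair_count[OF J(1)] J(1) I by (simp add: card_Diff_subset finite_subset)
  then show False using J(2) \<open>2 * n \<le> card I\<close> assms(3) by linarith
qed

end
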